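(* Let $A$ be a linear endomorphism of $\mathbb{E}^n$, $\mathbf{b}$ an orthonormal basis, $u\in\mathbb{E}^n$ non-zero and $\hat u=u/\|u\|$. Then $$A^{\mathrm{sym}}(u)=\mathbf{A}^e(\hat u)\,u+\tfrac12\sum_{k<l}\big([A,R_{kl}](\hat u)\cdot\hat u\big)R_{kl}(u),\qquad A^{\mathrm{skew}}(u)=-\tfrac12\sum_{k<l}\big(\{A,R_{kl}\}(\hat u)\cdot\hat u\big)R_{kl}(u),$$ where $[X,Y]=XY-YX$ and $\{X,Y\}=XY+YX$.
   Context: $\mathbb{E}^n$ is $\mathbb{R}^n$ with the standard inner product; $A^*$ is the adjoint of $A$, $A^{\mathrm{sym}}=\frac12(A+A^* )$, $A^{\mathrm{skew}}=\frac12(A-A^* )$. For an orthonormal basis $\mathbf{b}=\{b_1,\dots,b_n\}$ and $1\le k<l\le n$, $R_{kl}$ is the linear map with $R_{kl}(b_k)=b_l$, $R_{kl}(b_l)=-b_k$, $R_{kl}(b_m)=0$ for $m\ne k,l$. The expansion form is $\mathbf{A}^e(u):=A(u)\cdot u$. *)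

theory Defs
  imports "HOL-Analysis.Analysis"
begin

definition sym_part :: "('a::euclidean_space \<Rightarrow> 'a) \<Rightarrow> 'a \<Rightarrow> 'a" where
  "sym_part A = (\<lambda>x. (1/2) *\<^sub>R (A x + adjoint A x))"

definition skew_part :: "('a::euclidean_space \<Rightarrow> 'a) \<Rightarrow> 'a \<Rightarrow> 'a" where
  "skew_part A = (\<lambda>x. (1/2) *\<^sub>R (A x - adjoint A x))"

definition orthonormal_basis :: "(nat \<Rightarrow> 'a::euclidean_space) \<Rightarrow> bool" where
  "orthonormal_basis b \<longleftrightarrow>
     (\<forall>i\<in>{1..DIM('a)}. \<forall>j\<in>{1..DIM('a)}. b i \<bullet> b j = (if i = j then 1 else 0))"

text \<open>The rotation generator R_kl: the linear map with b_k \<mapsto> b_l, b_l \<mapsto> -b_k,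
  b_m \<mapsto> 0 otherwise (written out explicitly).\<close>
definition Rgen :: "(nat \<Rightarrow> 'a::euclidean_space) \<Rightarrow> nat \<Rightarrow> nat \<Rightarrow> 'a \<Rightarrow> 'a" where
  "Rgen b k l = (\<lambda>x. (b k \<bullet> x) *\<^sub>R b l - (b l \<bullet> x) *\<^sub>R b k)"

definition commutator :: "('a::real_vector \<Rightarrow> 'a) \<Rightarrow> ('a \<Rightarrow> 'a) \<Rightarrow> 'a \<Rightarrow> 'a" where
  "commutator X Y = (\<lambda>x. X (Y x) - Y (X x))"

definition anticommutator :: "('a::real_vector \<Rightarrow> 'a) \<Rightarrow> ('a \<Rightarrow> 'a) \<Rightarrow> 'a \<Rightarrow> 'a" where
  "anticommutator X Y = (\<lambda>x. X (Y x) + Y (X x))"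

definition expansion_form :: "('a::real_inner \<Rightarrow> 'a) \<Rightarrow> 'a \<Rightarrow> real" where
  "expansion_form A u = A u \<bullet> u"

end

theory Submission
  imports Defs
begin

text \<open>
  Everything rests on one identity for the rotation generators of an orthonormal basis:
  \<open>\<Sum>\<^bsub>k<l\<^esub> (R_kl e \<bullet> w) R_kl y = (e \<bullet> y) w - (w \<bullet> y) e\<close>.
  Since each \<open>R_kl\<close> is skew, \<open>[A,R_kl](e) \<bullet> e = R_kl e \<bullet> (A + A*) e\<close> and
  \<open>{A,R_kl}(e) \<bullet> e = R_kl e \<bullet> (A* - A) e\<close>. For the unit vector \<open>e = u/|u|\<close> the identity thus turns
  the two sums into the components of \<open>(A + A*) u\<close> and \<open>(A* - A) u\<close> orthogonal to \<open>u\<close>;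
  the component of \<open>(A + A*) u\<close> along \<open>u\<close> is \<open>2 A\<^sup>e(e) u\<close>, and that of \<open>(A - A*) u\<close> vanishes.
\<close>

lemma orthonormal_basis_inner_eq:
  assumes "orthonormal_basis (b :: nat \<Rightarrow> 'a::euclidean_space)"
    and "i \<in> {1..DIM('a)}" "j \<in> {1..DIM('a)}"
  shows "b i \<bullet> b j = (if i = j then 1 else 0)"
  using assms unfolding orthonormal_basis_def by blast

lemma orthonormal_basis_span:
  fixes b :: "nat \<Rightarrow> 'a::euclidean_space"
  assumes ob: "orthonormal_basis b"
  shows "span (b ` {1..DIM('a)}) = UNIV"
proof -
  let ?I = "{1..DIM('a)}"
  note bb = orthonormal_basis_inner_eq[OF ob]
  have "inj_on b ?I"
  proof (rule inj_onI)
    fix i j assume "i \<in> ?I" "j \<in> ?I" "b i = b j"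
    then show "i = j" using bb[of i j] bb[of j j] by (auto split: if_splits)
  qed
  then have card: "card (b ` ?I) = DIM('a)" by (simp add: card_image)
  have "pairwise orthogonal (b ` ?I)"
    unfolding pairwise_def orthogonal_def using bb by auto
  moreover have "0 \<notin> b ` ?I" using bb by force
  ultimately have "independent (b ` ?I)" by (rule pairwise_orthogonal_independent)
  then have "UNIV \<subseteq> span (b ` ?I)"
    using card_ge_dim_independent[of "b ` ?I" UNIV] card by simp
  then show ?thesis by auto
qed

lemma orthonormal_basis_expansion:
  fixes b :: "nat \<Rightarrow> 'a::euclidean_space"
  assumes ob: "orthonormal_basis b"
  shows "(\<Sum>i=1..DIM('a). (b i \<bullet> x) *\<^sub>R b i) = x"
proof -
  let ?I = "{1..DIM('a)}"
  define d where "d = x - (\<Sum>i\<in>?I. (b i \<bullet> x) *\<^sub>R b i)"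
  have "d \<bullet> b j = 0" if j: "j \<in> ?I" for j
  proof -
    have "(\<Sum>i\<in>?I. (b i \<bullet> x) *\<^sub>R b i) \<bullet> b j = (\<Sum>i\<in>?I. if i = j then b j \<bullet> x else 0)"
      unfolding inner_sum_left
      by (intro sum.cong) (simp_all add: orthonormal_basis_inner_eq[OF ob _ j])
    then show ?thesis
      using j unfolding d_def inner_diff_left by (simp add: inner_commute[of x])
  qed
  then have "orthogonal d d"
    using orthonormal_basis_span[OF ob]
    by (intro orthogonal_to_span[of d "b ` ?I"]) (auto simp: orthogonal_def)
  then show ?thesis unfolding d_def orthogonal_def by simp
qed

lemma orthonormal_basis_parseval:
  assumes "orthonormal_basis (b :: nat \<Rightarrow> 'a::euclidean_space)"
  shows "(\<Sum>i=1..DIM('a). (b i \<bullet> x) * (b i \<bullet> y)) = x \<bullet> y"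
  using arg_cong[OF orthonormal_basis_expansion[OF assms, of x], of "\<lambda>v. v \<bullet> y"]
  by (simp add: inner_sum_left)

lemma orthonormal_basis_double_sum:
  fixes b :: "nat \<Rightarrow> 'a::euclidean_space"
  assumes ob: "orthonormal_basis b"
  shows "(\<Sum>k=1..DIM('a). \<Sum>l=1..DIM('a). ((b k \<bullet> p) * (b k \<bullet> q) * (b l \<bullet> r)) *\<^sub>R b l)
         = (p \<bullet> q) *\<^sub>R r"
proof -
  have "(\<Sum>k=1..DIM('a). \<Sum>l=1..DIM('a). ((b k \<bullet> p) * (b k \<bullet> q) * (b l \<bullet> r)) *\<^sub>R b l)
      = (\<Sum>k=1..DIM('a). ((b k \<bullet> p) * (b k \<bullet> q)) *\<^sub>R (\<Sum>l=1..DIM('a). (b l \<bullet> r) *\<^sub>R b l))"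
    by (simp add: scaleR_sum_right)
  also have "\<dots> = (p \<bullet> q) *\<^sub>R r"
    unfolding orthonormal_basis_expansion[OF ob] scaleR_sum_left[symmetric]
      orthonormal_basis_parseval[OF ob] ..
  finally show ?thesis .
qed

lemma sum_upper_triangle_symmetric:
  fixes f :: "nat \<Rightarrow> nat \<Rightarrow> 'b::real_vector"
  assumes sym: "\<And>k l. f k l = f l k" and diag: "\<And>k. f k k = 0"
  shows "(\<Sum>k=1..n. \<Sum>l=k+1..n. f k l) = (1/2) *\<^sub>R (\<Sum>k=1..n. \<Sum>l=1..n. f k l)"
proof -
  have "(\<Sum>k=1..n. \<Sum>l=1..n. f k l) = 2 *\<^sub>R (\<Sum>k=1..n. \<Sum>l=k+1..n. f k l)"
  proof (induction n)
    case 0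
    then show ?case by simp
  next
    case (Suc n)
    have "(\<Sum>k=1..n. \<Sum>l=k+1..Suc n. f k l)
        = (\<Sum>k=1..n. \<Sum>l=k+1..n. f k l) + (\<Sum>k=1..n. f k (Suc n))"
      by (simp add: sum.distrib)
    moreover have "(\<Sum>l=1..n. f (Suc n) l) = (\<Sum>k=1..n. f k (Suc n))"
      using sym by simp
    ultimately show ?case
      using Suc.IH by (simp add: sum.distrib diag scaleR_2 algebra_simps)
  qed
  then show ?thesis by simp
qed

lemma inner_Rgen_swap: "Rgen b k l x \<bullet> y = - (Rgen b k l y \<bullet> x)"
  unfolding Rgen_def by (simp add: inner_diff_left algebra_simps)

lemma sum_Rgen_inner_scaleR_Rgen:
  fixes b :: "nat \<Rightarrow> 'a::euclidean_space"
  assumes ob: "orthonormal_basis b"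
  shows "(\<Sum>k=1..DIM('a). \<Sum>l=k+1..DIM('a). (Rgen b k l e \<bullet> w) *\<^sub>R Rgen b k l y)
        = (e \<bullet> y) *\<^sub>R w - (w \<bullet> y) *\<^sub>R e"
proof -
  let ?n = "DIM('a)"
  define f where "f k l = (Rgen b k l e \<bullet> w) *\<^sub>R Rgen b k l y" for k l
  have sym: "f k l = f l k" for k l
    unfolding f_def Rgen_def by (simp add: inner_diff_left algebra_simps)
  have diag: "f k k = 0" for k
    unfolding f_def Rgen_def by simp
  have expand: "f k l = ((b k \<bullet> e) * (b k \<bullet> y) * (b l \<bullet> w)) *\<^sub>R b l
      - ((b l \<bullet> y) * (b l \<bullet> w) * (b k \<bullet> e)) *\<^sub>R b k
      - ((b k \<bullet> y) * (b k \<bullet> w) * (b l \<bullet> e)) *\<^sub>R b l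
      + ((b l \<bullet> e) * (b l \<bullet> y) * (b k \<bullet> w)) *\<^sub>R b k" for k l
    unfolding f_def Rgen_def by (simp add: inner_diff_left algebra_simps)
  have swapped: "(\<Sum>k=1..?n. \<Sum>l=1..?n. ((b l \<bullet> p) * (b l \<bullet> q) * (b k \<bullet> r)) *\<^sub>R b k)
      = (p \<bullet> q) *\<^sub>R r" for p q r
    by (subst sum.swap) (rule orthonormal_basis_double_sum[OF ob])
  have "(\<Sum>k=1..?n. \<Sum>l=1..?n. f k l) = 2 *\<^sub>R ((e \<bullet> y) *\<^sub>R w - (w \<bullet> y) *\<^sub>R e)"
    unfolding expand sum_subtractf sum.distrib orthonormal_basis_double_sum[OF ob] swapped
    by (simp add: inner_commute[of w y] scaleR_2 algebra_simps)
      (simp only: mult_2_right scaleR_left_distrib add_ac)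
  then show ?thesis
    using sum_upper_triangle_symmetric[of f ?n, OF sym diag] by (simp add: f_def)
qed

lemma commutator_inner_self:
  fixes A :: "'a::euclidean_space \<Rightarrow> 'a"
  assumes "linear A" and skew: "\<And>x y. X x \<bullet> y = - (X y \<bullet> x)"
  shows "commutator A X e \<bullet> e = X e \<bullet> (A e + adjoint A e)"
  using adjoint_works[OF assms(1), of "X e" e] skew[of "A e" e]
  by (simp add: commutator_def inner_diff_left inner_add_right)

lemma anticommutator_inner_self:
  fixes A :: "'a::euclidean_space \<Rightarrow> 'a"
  assumes "linear A" and skew: "\<And>x y. X x \<bullet> y = - (X y \<bullet> x)"
  shows "anticommutator A X e \<bullet> e = X e \<bullet> (adjoint A e - A e)"
  using adjoint_works[OF assms(1), of "X e" e] skew[of "A e" e]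
  by (simp add: anticommutator_def inner_add_left inner_diff_right)

theorem corollary2p12:
  fixes A :: "'a::euclidean_space \<Rightarrow> 'a" and b :: "nat \<Rightarrow> 'a" and u :: 'a
  assumes "linear A"
    and "orthonormal_basis b"
    and "u \<noteq> 0"
  defines "uh \<equiv> (1 / norm u) *\<^sub>R u"
  shows "(sym_part A u =
           expansion_form A uh *\<^sub>R u
         + (1/2) *\<^sub>R (\<Sum>k=1..DIM('a). \<Sum>l=k+1..DIM('a).
              (commutator A (Rgen b k l) uh \<bullet> uh) *\<^sub>R Rgen b k l u)) \<and>
         (skew_part A u =
           - (1/2) *\<^sub>R (\<Sum>k=1..DIM('a). \<Sum>l=k+1..DIM('a).
              (anticommutator A (Rgen b k l) uh \<bullet> uh) *\<^sub>R Rgen b k l u))"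
proof -
  define n where "n = norm u"
  have u_eq: "u = n *\<^sub>R uh" and uh_u: "uh \<bullet> u = n"
    using assms(3) by (simp_all add: uh_def n_def dot_square_norm power2_eq_square)
  have adj: "uh \<bullet> adjoint A uh = A uh \<bullet> uh"
    using adjoint_works[OF assms(1)] .
  have scale: "A u = n *\<^sub>R A uh" "adjoint A u = n *\<^sub>R adjoint A uh"
    using u_eq linear_scale[OF assms(1)] linear_scale[OF adjoint_linear[OF assms(1)]] by metis+
  note rotation_sum = sum_Rgen_inner_scaleR_Rgen[OF assms(2), of uh _ u]
  note inner_Rgen = commutator_inner_self[OF assms(1) inner_Rgen_swap]
    anticommutator_inner_self[OF assms(1) inner_Rgen_swap]
  show ?thesis
    unfolding inner_Rgen rotation_sum sym_part_def skew_part_def expansion_form_def scale uh_u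
    using adj by (simp add: u_eq inner_commute algebra_simps)
qed

end
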